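(* Let $G$ be a finite simple undirected graph with vertex set $V$, $|V|=n\ge 1$, in which every vertex has degree at least $2$. Then $$E_{loc}(G)\le \tfrac12\bigl(1+CC(G)\bigr),$$ with equality when $G$ is a complete graph.
   Context: For a graph $H$ and vertices $i,j$, $d_H(i,j)$ is the number of edges in a shortest $i$–$j$ path in $H$, with $d_H(i,j)=\infty$ if no such path exists, and the convention $1/\infty=0$. For a graph $H$ with $k\ge 2$ vertices, its global efficiency is $E_{glob}(H)=\frac{1}{k(k-1)}\sum_{i\neq j} \frac{1}{d_H(i,j)}$, the sum over ordered pairs of distinct vertices. For a vertex $i$ of $G$, $G_i$ is the subgraph of $G$ induced by the neighbors of $i$ (not including $i$). The local efficiency is $E_{loc}(G)=\frac1n\sum_{i\in V} E_{glob}(G_i)$ and the (Watts–Strogatz) clustering coefficient is $CC(G)=\frac1n\sum_{i\in V}\frac{|E(G_i)|}{\binom{|V(G_i)|}{2}}$. *)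

theory Defs
  imports Main "HOL-Library.Extended_Nat" Complex_Main
begin

definition simple_graph :: "'a set \<Rightarrow> ('a \<Rightarrow> 'a \<Rightarrow> bool) \<Rightarrow> bool" where
  "simple_graph V E \<longleftrightarrow> finite V \<and> (\<forall>x y. E x y \<longrightarrow> E y x) \<and> (\<forall>x. \<not> E x x)
     \<and> (\<forall>x y. E x y \<longrightarrow> x \<in> V \<and> y \<in> V)"

definition neighbors :: "'a set \<Rightarrow> ('a \<Rightarrow> 'a \<Rightarrow> bool) \<Rightarrow> 'a \<Rightarrow> 'a set" where
  "neighbors V E i = {j \<in> V. E i j}"

definition degree :: "'a set \<Rightarrow> ('a \<Rightarrow> 'a \<Rightarrow> bool) \<Rightarrow> 'a \<Rightarrow> nat" where
  "degree V E i = card (neighbors V E i)"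

definition walk_in :: "('a \<Rightarrow> 'a \<Rightarrow> bool) \<Rightarrow> 'a set \<Rightarrow> 'a list \<Rightarrow> bool" where
  "walk_in E S xs \<longleftrightarrow> xs \<noteq> [] \<and> set xs \<subseteq> S \<and>
     (\<forall>k. Suc k < length xs \<longrightarrow> E (xs ! k) (xs ! Suc k))"

text \<open>Distance in the induced subgraph H = G[S]: minimal number of edges of an i--j walk
  (equivalently path) in H, and infinity if none exists (Inf of the empty set of enat).\<close>
definition dist_in :: "('a \<Rightarrow> 'a \<Rightarrow> bool) \<Rightarrow> 'a set \<Rightarrow> 'a \<Rightarrow> 'a \<Rightarrow> enat" where
  "dist_in E S i j = Inf {enat (length xs - 1) | xs. walk_in E S xs \<and> hd xs = i \<and> last xs = j}"

definition inv_dist :: "enat \<Rightarrow> real" where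
  "inv_dist d = (case d of enat k \<Rightarrow> 1 / real k | \<infinity> \<Rightarrow> 0)"

definition E_glob :: "('a \<Rightarrow> 'a \<Rightarrow> bool) \<Rightarrow> 'a set \<Rightarrow> real" where
  "E_glob E S = (let k = card S in
     (\<Sum>(i,j) \<in> {(i,j). i \<in> S \<and> j \<in> S \<and> i \<noteq> j}. inv_dist (dist_in E S i j))
       / (real k * (real k - 1)))"

definition num_edges :: "('a \<Rightarrow> 'a \<Rightarrow> bool) \<Rightarrow> 'a set \<Rightarrow> nat" where
  "num_edges E S = card {{a, b} | a b. a \<in> S \<and> b \<in> S \<and> E a b}"

definition E_loc :: "'a set \<Rightarrow> ('a \<Rightarrow> 'a \<Rightarrow> bool) \<Rightarrow> real" where
  "E_loc V E = (\<Sum>i\<in>V. E_glob E (neighbors V E i)) / real (card V)"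

definition CC :: "'a set \<Rightarrow> ('a \<Rightarrow> 'a \<Rightarrow> bool) \<Rightarrow> real" where
  "CC V E = (\<Sum>i\<in>V. real (num_edges E (neighbors V E i))
                     / real (card (neighbors V E i) choose 2)) / real (card V)"

definition complete_graph :: "'a set \<Rightarrow> ('a \<Rightarrow> 'a \<Rightarrow> bool) \<Rightarrow> bool" where
  "complete_graph V E \<longleftrightarrow> (\<forall>x\<in>V. \<forall>y\<in>V. x \<noteq> y \<longrightarrow> E x y)"

end

theory Submission
  imports Defs
begin

text \<open>Every pair of distinct vertices of a neighbourhood graph is at distance 1 if adjacent and
  at distance at least 2 otherwise, so 1/d is at most the weight 1 resp. 1/2. Summing these weights
  over the ordered pairs of the neighbourhood gives (number of pairs)/2 + (number of edges), i.e.
  global efficiency at most (1 + clustering)/2 for every neighbourhood, with equality when it is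
  complete (degree at least 2 makes the number of pairs positive); averaging over the vertices
  yields the theorem.\<close>

definition edge_density :: "('a \<Rightarrow> 'a \<Rightarrow> bool) \<Rightarrow> 'a set \<Rightarrow> real" where
  "edge_density E S = real (num_edges E S) / real (card S choose 2)"

lemma walk_in_distinct_ends_length:
  assumes "walk_in E S xs" "hd xs \<noteq> last xs"
  shows "2 \<le> length xs"
  using assms by (cases xs) (auto simp: walk_in_def Suc_le_eq split: if_split_asm)

lemma walk_in_nonadjacent_ends_length:
  assumes "walk_in E S xs" "hd xs \<noteq> last xs" "\<not> E (hd xs) (last xs)"
  shows "3 \<le> length xs"
proof (rule ccontr)
  assume "\<not> 3 \<le> length xs"
  with walk_in_distinct_ends_length[OF assms(1,2)] have "length xs = 2" by simp
  then obtain a b where "xs = [a, b]"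
    by (auto simp: numeral_2_eq_2 length_Suc_conv)
  with assms show False by (auto simp: walk_in_def)
qed

lemma dist_in_lowerI:
  assumes "\<And>xs. walk_in E S xs \<Longrightarrow> hd xs = i \<Longrightarrow> last xs = j \<Longrightarrow> k \<le> length xs - 1"
  shows "enat k \<le> dist_in E S i j"
  unfolding dist_in_def using assms by (auto intro!: Inf_greatest)

lemma dist_in_adjacent:
  assumes "E i j" "i \<in> S" "j \<in> S" "i \<noteq> j"
  shows "dist_in E S i j = 1"
proof (rule antisym)
  have "walk_in E S [i, j]"
    using assms by (auto simp: walk_in_def less_Suc_eq nth_Cons split: nat.splits)
  then show "dist_in E S i j \<le> 1"
    unfolding dist_in_def one_enat_def by (force intro: Inf_lower)
  show "1 \<le> dist_in E S i j"
    using dist_in_lowerI[of E S i j 1] walk_in_distinct_ends_length assms(4)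
    by (force simp: one_enat_def)
qed

lemma inv_dist_le_inverse:
  assumes "enat k \<le> d" "0 < k"
  shows "inv_dist d \<le> 1 / real k"
  using assms by (cases d) (auto simp: inv_dist_def frac_le)

lemma inv_dist_nonadjacent:
  assumes "\<not> E i j" "i \<noteq> j"
  shows "inv_dist (dist_in E S i j) \<le> 1 / 2"
proof -
  have "enat 2 \<le> dist_in E S i j"
    using dist_in_lowerI[of E S i j 2] walk_in_nonadjacent_ends_length assms by force
  then show ?thesis
    using inv_dist_le_inverse[of 2] by simp
qed

lemma card_adjacent_pairs:
  assumes sym: "\<forall>x y. E x y \<longrightarrow> E y x" and irr: "\<forall>x. \<not> E x x" and fin: "finite S"
  shows "card {(a, b). a \<in> S \<and> b \<in> S \<and> E a b} = 2 * num_edges E S"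
proof -
  let ?edges = "{{a, b} | a b. a \<in> S \<and> b \<in> S \<and> E a b}"
  let ?orient = "\<lambda>e. {(a, b). a \<in> S \<and> b \<in> S \<and> E a b \<and> {a, b} = e}"
  have pairs: "{(a, b). a \<in> S \<and> b \<in> S \<and> E a b} = (\<Union>e\<in>?edges. ?orient e)"
    by blast
  have "finite ?edges"
    by (rule finite_subset[of _ "Pow S"]) (use fin in auto)
  moreover have "finite (?orient e)" for e
    by (rule finite_subset[of _ "S \<times> S"]) (use fin in auto)
  moreover have "card (?orient e) = 2" if "e \<in> ?edges" for e
  proof -
    from that obtain x y where xy: "e = {x, y}" "x \<in> S" "y \<in> S" "E x y" by blast
    with sym have "?orient e = {(x, y), (y, x)}" by (auto simp: doubleton_eq_iff)
    moreover have "x \<noteq> y" using xy irr by auto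
    ultimately show ?thesis by simp
  qed
  ultimately have "card (\<Union>e\<in>?edges. ?orient e) = (\<Sum>e\<in>?edges. 2)"
    by (subst card_UN_disjoint) auto
  then show ?thesis
    by (simp add: pairs num_edges_def)
qed

lemma two_mult_choose_two: "2 * (n choose 2) = n * (n - 1)"
  by (metis Suc_1 binomial_absorption choose_one)

lemma card_distinct_pairs:
  assumes "finite S"
  shows "card {(i, j). i \<in> S \<and> j \<in> S \<and> i \<noteq> j} = 2 * (card S choose 2)"
proof -
  have "{(i, j). i \<in> S \<and> j \<in> S \<and> i \<noteq> j} = (SIGMA i:S. S - {i})" by auto
  then have "card {(i, j). i \<in> S \<and> j \<in> S \<and> i \<noteq> j} = card S * (card S - 1)"
    using assms by (simp add: card_Diff_singleton)
  then show ?thesis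
    by (simp add: two_mult_choose_two)
qed

lemma E_glob_eq_sum_over_pairs:
  "E_glob E S = (\<Sum>(i, j)\<in>{(i, j). i \<in> S \<and> j \<in> S \<and> i \<noteq> j}. inv_dist (dist_in E S i j))
                  / (2 * real (card S choose 2))"
proof -
  have "2 * real (card S choose 2) = real (card S * (card S - 1))"
    unfolding two_mult_choose_two[symmetric] by simp
  also have "\<dots> = real (card S) * (real (card S) - 1)"
    by (cases "card S") (auto simp: algebra_simps)
  finally show ?thesis
    by (simp add: E_glob_def Let_def mult.commute)
qed

lemma sum_adjacency_weight:
  assumes sym: "\<forall>x y. E x y \<longrightarrow> E y x" and irr: "\<forall>x. \<not> E x x" and fin: "finite S"
  shows "(\<Sum>(i, j)\<in>{(i, j). i \<in> S \<and> j \<in> S \<and> i \<noteq> j}. if E i j then 1 else 1 / 2)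
           = real (card S choose 2) + real (num_edges E S)"
proof -
  let ?P = "{(i, j). i \<in> S \<and> j \<in> S \<and> i \<noteq> j}"
  let ?A = "{(a, b). a \<in> S \<and> b \<in> S \<and> E a b}"
  have "finite ?P"
    by (rule finite_subset[of _ "S \<times> S"]) (use fin in auto)
  have "?A \<subseteq> ?P"
    using irr by auto
  have "(\<Sum>(i, j)\<in>?P. if E i j then 1 else 1 / 2)
          = (\<Sum>p\<in>?P. 1 / 2 + (if p \<in> ?A then 1 / 2 else 0 :: real))"
    by (rule sum.cong) (auto split: if_splits)
  also have "\<dots> = real (card ?P) / 2 + real (card ?A) / 2"
    using \<open>finite ?P\<close> \<open>?A \<subseteq> ?P\<close> by (simp add: sum.distrib sum.If_cases Int_absorb1)
  also have "\<dots> = real (card S choose 2) + real (num_edges E S)"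
    by (simp add: card_distinct_pairs card_adjacent_pairs assms)
  finally show ?thesis .
qed

lemma E_glob_le_half_one_plus_edge_density:
  assumes sym: "\<forall>x y. E x y \<longrightarrow> E y x" and irr: "\<forall>x. \<not> E x x" and fin: "finite S"
    and two: "2 \<le> card S"
  shows "E_glob E S \<le> (1 + edge_density E S) / 2"
    and "\<forall>x\<in>S. \<forall>y\<in>S. x \<noteq> y \<longrightarrow> E x y \<Longrightarrow> E_glob E S = (1 + edge_density E S) / 2"
proof -
  let ?P = "{(i, j). i \<in> S \<and> j \<in> S \<and> i \<noteq> j}"
  let ?w = "\<lambda>(i, j). if E i j then 1 else 1 / 2 :: real"
  have pos: "0 < real (card S choose 2)"
    using zero_less_binomial[OF two] of_nat_0_less_iff by blast
  have bound: "(1 + edge_density E S) / 2 = (\<Sum>p\<in>?P. ?w p) / (2 * real (card S choose 2))"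
    using pos two by (simp add: sum_adjacency_weight sym irr fin edge_density_def divide_simps)
  have "inv_dist (dist_in E S i j) \<le> ?w (i, j)" if "(i, j) \<in> ?P" for i j
    using that inv_dist_nonadjacent[of E i j S] dist_in_adjacent[of E i j S]
    by (auto simp: inv_dist_def one_enat_def)
  then show "E_glob E S \<le> (1 + edge_density E S) / 2"
    unfolding E_glob_eq_sum_over_pairs bound using pos
    by (intro divide_right_mono sum_mono) auto
  assume complete: "\<forall>x\<in>S. \<forall>y\<in>S. x \<noteq> y \<longrightarrow> E x y"
  have "inv_dist (dist_in E S i j) = ?w (i, j)" if "(i, j) \<in> ?P" for i j
    using that complete dist_in_adjacent[of E i j S] by (auto simp: inv_dist_def one_enat_def)
  then show "E_glob E S = (1 + edge_density E S) / 2"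
    unfolding E_glob_eq_sum_over_pairs bound by (intro arg_cong2[of _ _ _ _ "(/)"] sum.cong) auto
qed

lemma average_half_one_plus:
  assumes "finite V" "V \<noteq> {}"
  shows "(\<Sum>i\<in>V. (1 + f i) / 2) / real (card V) = (1 + (\<Sum>i\<in>V. f i) / real (card V)) / 2"
  using assms by (simp add: sum.distrib sum_divide_distrib[symmetric] field_simps)

theorem theorem3:
  fixes V :: "'a set" and E :: "'a \<Rightarrow> 'a \<Rightarrow> bool"
  assumes "simple_graph V E"
    and "card V \<ge> 1"
    and "\<forall>i\<in>V. degree V E i \<ge> 2"
  shows "E_loc V E \<le> (1 + CC V E) / 2 \<and>
         (complete_graph V E \<longrightarrow> E_loc V E = (1 + CC V E) / 2)"
proof -
  have sym: "\<forall>x y. E x y \<longrightarrow> E y x" and irr: "\<forall>x. \<not> E x x" and "finite V"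
    using assms(1) unfolding simple_graph_def by auto
  have "V \<noteq> {}" using assms(2) by auto
  have "finite (neighbors V E i)" for i
    using \<open>finite V\<close> by (simp add: neighbors_def)
  then have local: "E_glob E (neighbors V E i) \<le> (1 + edge_density E (neighbors V E i)) / 2"
    "complete_graph V E \<Longrightarrow> E_glob E (neighbors V E i) = (1 + edge_density E (neighbors V E i)) / 2"
    if "i \<in> V" for i
    using E_glob_le_half_one_plus_edge_density[OF sym irr] assms(3) that
    by (auto simp: degree_def complete_graph_def neighbors_def)
  have CC: "(1 + CC V E) / 2 = (\<Sum>i\<in>V. (1 + edge_density E (neighbors V E i)) / 2) / real (card V)"
    using average_half_one_plus[OF \<open>finite V\<close> \<open>V \<noteq> {}\<close>] by (simp add: CC_def edge_density_def)
  show ?thesis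
    unfolding CC E_loc_def
    using local by (auto intro!: divide_right_mono sum_mono intro: sum.cong)
qed

end
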